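(* Let $F$ be a field of characteristic $\neq 2$ and let $(V,q)$ be the orthogonal direct sum of nondegenerate quadratic spaces $(V_1,q_1)$ and $(V_2,q_2)$, so that $C(V_i,q_i)\subseteq C(V,q)$. Let $t_i\in\Gamma^+(V_i,q_i)$ and suppose there exist $s_i\in\Gamma(V_i,q_i)$ with $s_it_is_i^{-1}=N(t_i)t_i^{-1}$ for $i=1,2$. Let $t=t_1t_2\in\Gamma^+(V,q)$ and $s=s_1s_2$. Then $sts^{-1}=N(t)t^{-1}$.
   Context: $C(V,q)=T(V)/\langle x\otimes x-q(x)\cdot1\rangle=C_0\oplus C_1$ is the Clifford algebra, $\Gamma(V,q)=\{u\in C(V,q)^\times: uVu^{-1}\subseteq V\}$ the Clifford group and $\Gamma^+(V,q)=\Gamma(V,q)\cap C_0(V,q)$. With $\tau$ the anti-involution reversing products of vectors, $N(u)=\tau(u)u\in F^*$ is the norm. *)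

theory Defs
  imports Complex_Main "HOL-Library.Poly_Mapping"
begin

text \<open>A word is a finite list of vectors; words form a (non-commutative) monoid
under concatenation, written additively so that the monoid algebra
('v word \<Rightarrow>0 'a) of Poly_Mapping is the free associative F-algebra on the set V.\<close>

datatype 'v word = Word (word_list: "'v list")

instantiation word :: (type) monoid_add
begin
definition zero_word_def: "0 = Word []"
definition plus_word_def: "u + w = Word (word_list u @ word_list w)"
instance by standard (auto simp: zero_word_def plus_word_def)
end

definition word_rev :: "'v word \<Rightarrow> 'v word" where
  "word_rev w = Word (rev (word_list w))"

type_synonym ('v, 'a) freealg = "'v word \<Rightarrow>\<^sub>0 'a"

definition iota :: "'v \<Rightarrow> ('v, 'a::field) freealg" where
  "iota v = Poly_Mapping.single (Word [v]) 1"

definition scal :: "'a::field \<Rightarrow> ('v, 'a) freealg" where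
  "scal c = Poly_Mapping.single 0 c"

definition tau :: "('v, 'a::field) freealg \<Rightarrow> ('v, 'a) freealg" where
  "tau x = Poly_Mapping.map_key word_rev x"

definition FA :: "'v set \<Rightarrow> ('v, 'a::field) freealg set" where
  "FA W = {x. \<forall>w \<in> Poly_Mapping.keys x. set (word_list w) \<subseteq> W}"

text \<open>Generators of the kernel of F<W> -> C(W,q): linearity relations (turning F<W>
into T(W)) together with the Clifford relations v v - q(v).\<close>
definition clif_gens ::
  "('a::field \<Rightarrow> 'v::ab_group_add \<Rightarrow> 'v) \<Rightarrow> ('v \<Rightarrow> 'a) \<Rightarrow> 'v set \<Rightarrow> ('v, 'a) freealg set" where
  "clif_gens scale q W =
     {iota (u + v) - iota u - iota v | u v. u \<in> W \<and> v \<in> W}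
   \<union> {iota (scale c v) - scal c * iota v | c v. v \<in> W}
   \<union> {iota v * iota v - scal (q v) | v. v \<in> W}"

inductive_set clif_ideal ::
  "('a::field \<Rightarrow> 'v::ab_group_add \<Rightarrow> 'v) \<Rightarrow> ('v \<Rightarrow> 'a) \<Rightarrow> 'v set \<Rightarrow> ('v, 'a) freealg set"
  for scale q W where
  gen: "x \<in> clif_gens scale q W \<Longrightarrow> x \<in> clif_ideal scale q W"
| zero: "0 \<in> clif_ideal scale q W"
| add: "x \<in> clif_ideal scale q W \<Longrightarrow> y \<in> clif_ideal scale q W \<Longrightarrow> x + y \<in> clif_ideal scale q W"
| lmult: "a \<in> FA W \<Longrightarrow> x \<in> clif_ideal scale q W \<Longrightarrow> a * x \<in> clif_ideal scale q W"
| rmult: "a \<in> FA W \<Longrightarrow> x \<in> clif_ideal scale q W \<Longrightarrow> x * a \<in> clif_ideal scale q W"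

definition cl_eq ::
  "('a::field \<Rightarrow> 'v::ab_group_add \<Rightarrow> 'v) \<Rightarrow> ('v \<Rightarrow> 'a) \<Rightarrow> 'v set \<Rightarrow> ('v, 'a) freealg \<Rightarrow> ('v, 'a) freealg \<Rightarrow> bool" where
  "cl_eq scale q W x y \<longleftrightarrow> x - y \<in> clif_ideal scale q W"

definition is_cl_inv where
  "is_cl_inv scale q W u u' \<longleftrightarrow> u' \<in> FA W \<and> cl_eq scale q W (u * u') 1 \<and> cl_eq scale q W (u' * u) 1"

definition cl_inv where
  "cl_inv scale q W u = (SOME u'. is_cl_inv scale q W u u')"

definition C0 :: "('a::field \<Rightarrow> 'v::ab_group_add \<Rightarrow> 'v) \<Rightarrow> ('v \<Rightarrow> 'a) \<Rightarrow> 'v set \<Rightarrow> ('v, 'a) freealg set" where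
  "C0 scale q W = {u \<in> FA W. \<exists>u' \<in> FA W.
      (\<forall>w \<in> Poly_Mapping.keys u'. even (length (word_list w))) \<and> cl_eq scale q W u u'}"

definition Gamma :: "('a::field \<Rightarrow> 'v::ab_group_add \<Rightarrow> 'v) \<Rightarrow> ('v \<Rightarrow> 'a) \<Rightarrow> 'v set \<Rightarrow> ('v, 'a) freealg set" where
  "Gamma scale q W = {u \<in> FA W. (\<exists>u'. is_cl_inv scale q W u u') \<and>
      (\<forall>v \<in> W. \<exists>v' \<in> W. cl_eq scale q W (u * iota v * cl_inv scale q W u) (iota v'))}"

definition Gamma_plus where
  "Gamma_plus scale q W = Gamma scale q W \<inter> C0 scale q W"

text \<open>Norm N(u) = tau(u) u (an element of C(W,q); it is a scalar for u in Gamma).\<close>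
definition Nrm :: "('v, 'a::field) freealg \<Rightarrow> ('v, 'a) freealg" where
  "Nrm u = tau u * u"

definition polar :: "('v::ab_group_add \<Rightarrow> 'a::field) \<Rightarrow> 'v \<Rightarrow> 'v \<Rightarrow> 'a" where
  "polar q u v = q (u + v) - q u - q v"

definition quadratic_form :: "('a::field \<Rightarrow> 'v::ab_group_add \<Rightarrow> 'v) \<Rightarrow> ('v \<Rightarrow> 'a) \<Rightarrow> bool" where
  "quadratic_form scale q \<longleftrightarrow>
     (\<forall>c v. q (scale c v) = c * c * q v) \<and>
     (\<forall>u u' v. polar q (u + u') v = polar q u v + polar q u' v) \<and>
     (\<forall>c u v. polar q (scale c u) v = c * polar q u v)"

definition nondeg_quad_subspace ::
  "('a::field \<Rightarrow> 'v::ab_group_add \<Rightarrow> 'v) \<Rightarrow> ('v \<Rightarrow> 'a) \<Rightarrow> 'v set \<Rightarrow> bool" where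
  "nondeg_quad_subspace scale q W \<longleftrightarrow>
     module.subspace scale W \<and>
     (\<exists>B. finite B \<and> B \<subseteq> W \<and> module.span scale B = W) \<and>
     (\<forall>u \<in> W. (\<forall>v \<in> W. polar q u v = 0) \<longrightarrow> u = 0)"

end

theory Submission
  imports Defs
begin

text \<open>Since t1 is a unit, N(t1) t1^-1 = tau(t1), so the hypotheses say s1 t1 s1^-1 = tau(t1)
and s2 t2 s2^-1 = tau(t2). Orthogonal vectors anticommute in C(V,q), hence every element of
C(V1) commutes with every even element of C(V2) and vice versa. These commutations give
s t s^-1 = s1 t1 (s2 t2 s2^-1) s1^-1 = s1 t1 s1^-1 tau(t2) = tau(t1) tau(t2) = tau(t2) tau(t1) = tau(t),
and they show that t conjugates v = v1 + v2 to t1 v1 t1^-1 + t2 v2 t2^-1, a vector,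
so t lies in the Clifford group of V.\<close>

lemma FA_UNIV [simp]: "FA UNIV = UNIV"
  by (auto simp: FA_def)

lemma iota_FA: "v \<in> W \<Longrightarrow> iota v \<in> FA W"
  by (simp add: FA_def iota_def)

lemma poly_mapping_sum_single: "(\<Sum>k\<in>Poly_Mapping.keys x. Poly_Mapping.single k (Poly_Mapping.lookup x k)) = x"
  by (rule poly_mapping_eqI) (auto simp: lookup_sum lookup_single when_def in_keys_iff)

lemma scal_commute: "scal c * x = x * scal (c::'a::field)"
proof -
  have single: "scal c * Poly_Mapping.single k d = Poly_Mapping.single k d * scal c" for k and d :: 'a
    by (simp add: scal_def mult_single mult.commute)
  show ?thesis
    by (subst (1 2) poly_mapping_sum_single[of x, symmetric])
      (simp only: sum_distrib_left sum_distrib_right single)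
qed

lemma single_Word_eq_scal_prod:
  "Poly_Mapping.single (Word ws) c = scal c * prod_list (map iota ws :: ('v, 'a::field) freealg list)"
proof (induction ws)
  case Nil
  then show ?case by (simp add: scal_def zero_word_def[symmetric])
next
  case (Cons v ws)
  have "Poly_Mapping.single (Word (v # ws)) c = iota v * Poly_Mapping.single (Word ws) c"
    by (simp add: iota_def mult_single plus_word_def)
  also have "\<dots> = scal c * (iota v * prod_list (map iota ws))"
    by (simp add: Cons scal_commute mult.assoc)
  finally show ?case by simp
qed

lemma freealg_monomial_expansion:
  "x = (\<Sum>k\<in>Poly_Mapping.keys x. scal (Poly_Mapping.lookup x k) * prod_list (map iota (word_list k)))"
  by (subst poly_mapping_sum_single[of x, symmetric])
    (simp add: single_Word_eq_scal_prod[symmetric])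

lemma word_rev_plus: "word_rev (a + b) = word_rev b + word_rev a"
  by (simp add: word_rev_def plus_word_def)

lemma inj_word_rev: "inj word_rev"
  by (rule injI) (metis word.collapse word_rev_def rev_rev_ident word.sel)

lemma tau_single: "tau (Poly_Mapping.single k c) = Poly_Mapping.single (word_rev k) c"
  using map_key_single[OF inj_word_rev, of "word_rev k" c]
  by (simp add: tau_def word_rev_def)

lemma tau_add: "tau (x + y) = tau x + tau y"
  unfolding tau_def by (rule map_key_plus[OF inj_word_rev])

lemma tau_diff: "tau (x - y) = tau x - tau y"
  by (metis add_diff_cancel diff_add_cancel tau_add)

lemma tau_zero [simp]: "tau 0 = 0"
  unfolding tau_def by (rule map_key_zero[OF inj_word_rev])

lemma tau_sum: "tau (sum f A) = (\<Sum>a\<in>A. tau (f a))"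
  by (induction A rule: infinite_finite_induct) (auto simp: tau_add)

lemma tau_mult: "tau (x * y) = tau y * tau (x :: ('v, 'a::field) freealg)"
proof -
  let ?m = "\<lambda>z k. Poly_Mapping.single k (Poly_Mapping.lookup z k) :: ('v, 'a) freealg"
  have "tau (x * y) = (\<Sum>a\<in>Poly_Mapping.keys x. \<Sum>b\<in>Poly_Mapping.keys y. tau (?m y b) * tau (?m x a))"
    by (subst (1 2) poly_mapping_sum_single[symmetric])
      (simp add: sum_product tau_sum tau_single mult_single word_rev_plus mult.commute)
  also have "\<dots> = tau y * tau x"
    by (subst sum.swap) (simp only: sum_product[symmetric] tau_sum[symmetric] poly_mapping_sum_single)
  finally show ?thesis .
qed

lemma tau_iota [simp]: "tau (iota v) = iota v"
  by (simp add: iota_def tau_single word_rev_def)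

lemma tau_scal [simp]: "tau (scal c) = scal c"
  by (simp add: scal_def tau_single zero_word_def word_rev_def)

lemma keys_tau: "Poly_Mapping.keys (tau x) = word_rev -` Poly_Mapping.keys x"
  unfolding tau_def by (rule keys_map_key[OF inj_word_rev])

lemma FA_tau: "x \<in> FA W \<Longrightarrow> tau x \<in> FA W"
  by (auto simp: FA_def keys_tau word_rev_def) (metis word.sel set_rev subsetD)

definition even_words :: "('v, 'a::field) freealg \<Rightarrow> bool" where
  "even_words x \<longleftrightarrow> (\<forall>w\<in>Poly_Mapping.keys x. even (length (word_list w)))"

lemma even_words_mult: "even_words x \<Longrightarrow> even_words y \<Longrightarrow> even_words (x * y)"
  unfolding even_words_def using keys_mult[of x y] by (fastforce simp: plus_word_def)

lemma even_words_tau: "even_words x \<Longrightarrow> even_words (tau x)"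
  by (auto simp: even_words_def keys_tau word_rev_def)

context
  fixes scale :: "'a::field \<Rightarrow> 'v::ab_group_add \<Rightarrow> 'v" and q :: "'v \<Rightarrow> 'a"
begin

abbreviation cl_equiv :: "('v, 'a) freealg \<Rightarrow> ('v, 'a) freealg \<Rightarrow> bool" (infix "\<approx>" 50) where
  "x \<approx> y \<equiv> cl_eq scale q UNIV x y"

lemma clif_ideal_mult_left: "x \<in> clif_ideal scale q UNIV \<Longrightarrow> a * x \<in> clif_ideal scale q UNIV"
  by (rule clif_ideal.lmult) auto

lemma clif_ideal_mult_right: "x \<in> clif_ideal scale q UNIV \<Longrightarrow> x * a \<in> clif_ideal scale q UNIV"
  by (rule clif_ideal.rmult) auto

lemma clif_ideal_uminus: "x \<in> clif_ideal scale q UNIV \<Longrightarrow> - x \<in> clif_ideal scale q UNIV"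
  using clif_ideal_mult_right[of x "- 1"] by simp

lemma cl_eq_refl [simp]: "x \<approx> x"
  by (simp add: cl_eq_def clif_ideal.zero)

lemma cl_eq_sym: "x \<approx> y \<Longrightarrow> y \<approx> x"
  unfolding cl_eq_def using clif_ideal_uminus by fastforce

lemma cl_eq_trans [trans]: "x \<approx> y \<Longrightarrow> y \<approx> z \<Longrightarrow> x \<approx> z"
  unfolding cl_eq_def using clif_ideal.add by fastforce

lemma cl_eq_add: "x \<approx> x' \<Longrightarrow> y \<approx> y' \<Longrightarrow> x + y \<approx> x' + y'"
  unfolding cl_eq_def using clif_ideal.add[of "x - x'" scale q UNIV "y - y'"]
  by (simp add: algebra_simps)

lemma cl_eq_sum: "(\<And>i. i \<in> S \<Longrightarrow> f i \<approx> g i) \<Longrightarrow> sum f S \<approx> sum g S"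
  by (induction S rule: infinite_finite_induct) (auto intro: cl_eq_add)

lemma cl_eq_mult: "x \<approx> x' \<Longrightarrow> y \<approx> y' \<Longrightarrow> x * y \<approx> x' * y'"
proof -
  assume "x \<approx> x'" "y \<approx> y'"
  moreover have "x * y - x' * y' = (x - x') * y + x' * (y - y')"
    by (simp add: algebra_simps)
  ultimately show ?thesis
    unfolding cl_eq_def by (simp add: clif_ideal.add clif_ideal_mult_left clif_ideal_mult_right)
qed

lemma cl_eq_mult_left: "y \<approx> y' \<Longrightarrow> a * y \<approx> a * y'"
  by (rule cl_eq_mult) simp_all

lemma cl_eq_mult_right: "y \<approx> y' \<Longrightarrow> y * a \<approx> y' * a"
  by (rule cl_eq_mult) simp_all

lemma clif_ideal_subset_UNIV: "x \<in> clif_ideal scale q W \<Longrightarrow> x \<in> clif_ideal scale q UNIV"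
proof (induction rule: clif_ideal.induct)
  case (gen x)
  then show ?case by (intro clif_ideal.gen) (auto simp: clif_gens_def)
qed (auto intro: clif_ideal.intros)

lemma cl_eq_UNIV: "cl_eq scale q W x y \<Longrightarrow> x \<approx> y"
  unfolding cl_eq_def by (rule clif_ideal_subset_UNIV)

lemma is_cl_inv_UNIV: "is_cl_inv scale q W u a \<Longrightarrow> is_cl_inv scale q UNIV u a"
  unfolding is_cl_inv_def using cl_eq_UNIV by auto

lemma tau_clif_ideal: "x \<in> clif_ideal scale q W \<Longrightarrow> tau x \<in> clif_ideal scale q W"
proof (induction rule: clif_ideal.induct)
  case (gen x)
  then have "tau x = x"
    by (auto simp: clif_gens_def tau_diff tau_mult scal_commute)
  with gen show ?case by (simp add: clif_ideal.gen)
next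
  case (lmult a x)
  then show ?case by (simp add: tau_mult clif_ideal.rmult FA_tau)
next
  case (rmult a x)
  then show ?case by (simp add: tau_mult clif_ideal.lmult FA_tau)
qed (simp_all add: tau_add clif_ideal.intros)

lemma C0_iff:
  "t \<in> C0 scale q W \<longleftrightarrow> t \<in> FA W \<and> (\<exists>e\<in>FA W. even_words e \<and> cl_eq scale q W t e)"
  by (simp add: C0_def even_words_def)

lemma C0_tau: "t \<in> C0 scale q W \<Longrightarrow> tau t \<in> C0 scale q W"
  unfolding C0_iff cl_eq_def
  by (metis FA_tau even_words_tau tau_clif_ideal tau_diff)

lemma C0_UNIV: "t \<in> C0 scale q W \<Longrightarrow> t \<in> C0 scale q UNIV"
  unfolding C0_iff using cl_eq_UNIV by auto

lemma C0_mult: "t \<in> C0 scale q UNIV \<Longrightarrow> u \<in> C0 scale q UNIV \<Longrightarrow> t * u \<in> C0 scale q UNIV"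
  unfolding C0_iff using even_words_mult cl_eq_mult by fastforce

lemma polar_commute: "polar q u v = polar q v u"
  by (simp add: polar_def add.commute)

lemma iota_add: "iota (u + v) \<approx> iota u + iota v"
  unfolding cl_eq_def by (rule clif_ideal.gen) (auto simp: clif_gens_def diff_diff_eq)

lemma iota_square: "iota v * iota v \<approx> scal (q v)"
  unfolding cl_eq_def by (rule clif_ideal.gen) (auto simp: clif_gens_def)

text \<open>Polarising v v = q(v): (u + v)(u + v) = u u + v v forces u v + v u = 0.\<close>

lemma orthogonal_anticommute:
  assumes "polar q u v = 0"
  shows "iota u * iota v \<approx> - (iota v * iota u)"
proof -
  have "(iota u + iota v) * (iota u + iota v) \<approx> iota (u + v) * iota (u + v)"
    using cl_eq_mult[OF cl_eq_sym[OF iota_add] cl_eq_sym[OF iota_add]] .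
  also have "\<dots> \<approx> scal (q (u + v))"
    by (rule iota_square)
  also have "scal (q (u + v)) = scal (q u) + scal (q v)"
    using assms by (simp add: polar_def scal_def single_add algebra_simps)
  also have "\<dots> \<approx> iota u * iota u + iota v * iota v"
    using cl_eq_sym[OF cl_eq_add[OF iota_square iota_square]] .
  finally show ?thesis
    unfolding cl_eq_def by (simp add: algebra_simps)
qed

lemma commute_by_monomials:
  assumes "\<And>k. k \<in> Poly_Mapping.keys x \<Longrightarrow>
    prod_list (map iota (word_list k)) * y \<approx> y * prod_list (map iota (word_list k))"
  shows "x * y \<approx> y * x"
proof -
  have "scal c * m * y \<approx> y * (scal c * m)" if "m * y \<approx> y * m" for c m
    using cl_eq_mult_left[OF that, of "scal c"] by (simp add: mult.assoc scal_commute)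
  then show ?thesis
    using assms
    by (subst (1 2) freealg_monomial_expansion[of x])
      (simp add: sum_distrib_left sum_distrib_right cl_eq_sum)
qed

lemma prod_iota_commute:
  assumes "\<And>v. v \<in> A \<Longrightarrow> iota v * y \<approx> y * iota v" and "set ws \<subseteq> A"
  shows "prod_list (map iota ws) * y \<approx> y * prod_list (map iota ws)"
  using assms(2)
proof (induction ws)
  case (Cons v ws)
  have "prod_list (map iota (v # ws)) * y = iota v * (prod_list (map iota ws) * y)"
    by (simp add: mult.assoc)
  also have "\<dots> \<approx> iota v * (y * prod_list (map iota ws))"
    using Cons by (intro cl_eq_mult_left) simp
  also have "\<dots> = (iota v * y) * prod_list (map iota ws)"
    by (simp add: mult.assoc)
  also have "\<dots> \<approx> (y * iota v) * prod_list (map iota ws)"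
    using Cons assms(1) by (intro cl_eq_mult_right) simp
  finally show ?case
    by (simp add: mult.assoc)
qed simp

lemma prod_iota_anticommute:
  assumes "\<And>b. b \<in> B \<Longrightarrow> iota v * iota b \<approx> - (iota b * iota v)" and "set ws \<subseteq> B"
  shows "iota v * prod_list (map iota ws) \<approx> (- 1) ^ length ws * (prod_list (map iota ws) * iota v)"
  using assms(2)
proof (induction ws)
  case (Cons b ws)
  have "iota v * prod_list (map iota (b # ws)) = (iota v * iota b) * prod_list (map iota ws)"
    by (simp add: mult.assoc)
  also have "\<dots> \<approx> - (iota b * iota v) * prod_list (map iota ws)"
    using Cons assms(1) by (intro cl_eq_mult_right) simp
  also have "\<dots> = - iota b * (iota v * prod_list (map iota ws))"
    by (simp add: mult.assoc)
  also have "\<dots> \<approx> - iota b * ((- 1) ^ length ws * (prod_list (map iota ws) * iota v))"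
    using Cons by (intro cl_eq_mult_left) simp
  also have "\<dots> = (- 1) ^ length (b # ws) * (prod_list (map iota (b # ws)) * iota v)"
    by (cases "even (length ws)") (simp_all add: mult.assoc)
  finally show ?case .
qed simp

lemma even_words_commute:
  assumes "\<And>b. b \<in> B \<Longrightarrow> iota v * iota b \<approx> - (iota b * iota v)"
    and "e \<in> FA B" and "even_words e"
  shows "e * iota v \<approx> iota v * e"
proof (rule commute_by_monomials)
  fix k assume k: "k \<in> Poly_Mapping.keys e"
  with assms(2,3) have set: "set (word_list k) \<subseteq> B" and even: "even (length (word_list k))"
    by (auto simp: FA_def even_words_def)
  have "iota v * prod_list (map iota (word_list k)) \<approx> prod_list (map iota (word_list k)) * iota v"
    using prod_iota_anticommute[OF assms(1) set] unfolding neg_one_even_power[OF even] by simp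
  then show "prod_list (map iota (word_list k)) * iota v \<approx> iota v * prod_list (map iota (word_list k))"
    by (rule cl_eq_sym)
qed

lemma C0_orthogonal_commute:
  assumes orth: "\<forall>u\<in>A. \<forall>v\<in>B. polar q u v = 0"
    and x: "x \<in> FA A" and t: "t \<in> C0 scale q B"
  shows "x * t \<approx> t * x"
proof -
  obtain e where e: "e \<in> FA B" "even_words e" "t \<approx> e"
    using t cl_eq_UNIV unfolding C0_iff by blast
  have commute_iota: "iota v * e \<approx> e * iota v" if "v \<in> A" for v
  proof (rule cl_eq_sym, rule even_words_commute[OF _ e(1,2)])
    show "iota v * iota b \<approx> - (iota b * iota v)" if "b \<in> B" for b
      using orth \<open>v \<in> A\<close> that by (simp add: orthogonal_anticommute)
  qed
  have xe: "x * e \<approx> e * x"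
  proof (rule commute_by_monomials)
    fix k assume "k \<in> Poly_Mapping.keys x"
    with x have "set (word_list k) \<subseteq> A"
      by (auto simp: FA_def)
    with commute_iota show "prod_list (map iota (word_list k)) * e \<approx> e * prod_list (map iota (word_list k))"
      by (rule prod_iota_commute)
  qed
  have "x * t \<approx> x * e"
    using e(3) by (rule cl_eq_mult_left)
  also have "\<dots> \<approx> e * x"
    by (rule xe)
  also have "\<dots> \<approx> t * x"
    using e(3) by (rule cl_eq_mult_right[OF cl_eq_sym])
  finally show ?thesis .
qed

lemma Gamma_is_cl_inv: "u \<in> Gamma scale q W \<Longrightarrow> is_cl_inv scale q W u (cl_inv scale q W u)"
  unfolding Gamma_def cl_inv_def by (blast intro: someI_ex)

lemma is_cl_inv_unique:
  assumes "is_cl_inv scale q UNIV u a" "is_cl_inv scale q UNIV u b"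
  shows "a \<approx> b"
proof -
  have "a = a * 1"
    by simp
  also have "\<dots> \<approx> a * (u * b)"
    using assms(2) by (intro cl_eq_mult_left) (simp add: is_cl_inv_def cl_eq_sym)
  also have "\<dots> = (a * u) * b"
    by (simp add: mult.assoc)
  also have "\<dots> \<approx> 1 * b"
    using assms(1) by (intro cl_eq_mult_right) (simp add: is_cl_inv_def)
  finally show ?thesis
    by simp
qed

lemma is_cl_inv_mult:
  assumes "is_cl_inv scale q UNIV u a" "is_cl_inv scale q UNIV w b"
  shows "is_cl_inv scale q UNIV (u * w) (b * a)"
proof -
  have "u * w * (b * a) = u * (w * b) * a" "b * a * (u * w) = b * (a * u) * w"
    by (simp_all only: mult.assoc)
  moreover have "u * (w * b) * a \<approx> u * 1 * a" "b * (a * u) * w \<approx> b * 1 * w"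
    using assms unfolding is_cl_inv_def by (meson cl_eq_mult_left cl_eq_mult_right)+
  ultimately show ?thesis
    using assms by (auto simp: is_cl_inv_def intro: cl_eq_trans)
qed

lemma cl_inv_mult:
  assumes "is_cl_inv scale q UNIV u a" "is_cl_inv scale q UNIV w b"
  shows "cl_inv scale q UNIV (u * w) \<approx> b * a"
  using is_cl_inv_mult[OF assms]
  by (intro is_cl_inv_unique) (auto simp: cl_inv_def intro: someI)

lemma Gamma_Nrm_mult_cl_inv:
  assumes "u \<in> Gamma scale q W"
  shows "Nrm u * cl_inv scale q W u \<approx> tau u"
proof -
  have "u * cl_inv scale q W u \<approx> 1"
    using is_cl_inv_UNIV[OF Gamma_is_cl_inv[OF assms]] by (simp add: is_cl_inv_def)
  then have "tau u * (u * cl_inv scale q W u) \<approx> tau u * 1"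
    by (rule cl_eq_mult_left)
  then show ?thesis
    by (simp add: Nrm_def mult.assoc)
qed

lemma conjugate_commuting:
  assumes "x * t \<approx> t * x" "t * b \<approx> 1"
  shows "t * x * b \<approx> x"
proof -
  have "t * x * b \<approx> x * t * b"
    using assms(1) by (rule cl_eq_mult_right[OF cl_eq_sym])
  also have "\<dots> \<approx> x * 1"
    unfolding mult.assoc using assms(2) by (rule cl_eq_mult_left)
  finally show ?thesis
    by simp
qed

lemma Gamma_plus_mult_orthogonal:
  assumes dsum: "\<forall>v. \<exists>v1\<in>V1. \<exists>v2\<in>V2. v = v1 + v2"
    and orth: "\<forall>v1\<in>V1. \<forall>v2\<in>V2. polar q v1 v2 = 0"
    and t1: "t1 \<in> Gamma_plus scale q V1" and t2: "t2 \<in> Gamma_plus scale q V2"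
  shows "t1 * t2 \<in> Gamma_plus scale q UNIV"
proof -
  define b1 b2 where "b1 = cl_inv scale q V1 t1" and "b2 = cl_inv scale q V2 t2"
  have inv: "is_cl_inv scale q UNIV t1 b1" "is_cl_inv scale q UNIV t2 b2"
    using t1 t2 unfolding b1_def b2_def Gamma_plus_def
    by (blast intro: is_cl_inv_UNIV Gamma_is_cl_inv)+
  then have tb: "t1 * b1 \<approx> 1" "t2 * b2 \<approx> 1"
    by (simp_all add: is_cl_inv_def)
  have C0: "t1 \<in> C0 scale q V1" "t2 \<in> C0 scale q V2"
    using t1 t2 by (simp_all add: Gamma_plus_def)
  have orth': "\<forall>v2\<in>V2. \<forall>v1\<in>V1. polar q v2 v1 = 0"
    using orth by (metis polar_commute)
  have conj: "\<exists>v'. t1 * t2 * iota v * cl_inv scale q UNIV (t1 * t2) \<approx> iota v'" for v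
  proof -
    obtain v1 v2 where v: "v1 \<in> V1" "v2 \<in> V2" "v = v1 + v2"
      using dsum by blast
    obtain v1' where v1': "t1 * iota v1 * b1 \<approx> iota v1'"
      using t1 v(1) unfolding Gamma_plus_def Gamma_def b1_def by (blast intro: cl_eq_UNIV)
    obtain v2' where "v2' \<in> V2" and v2': "t2 * iota v2 * b2 \<approx> iota v2'"
      using t2 v(2) unfolding Gamma_plus_def Gamma_def b2_def by (blast intro: cl_eq_UNIV)
    have "t1 * t2 * iota v * cl_inv scale q UNIV (t1 * t2) \<approx> t1 * t2 * iota v * (b2 * b1)"
      by (rule cl_eq_mult_left, rule cl_inv_mult[OF inv])
    also have "\<dots> \<approx> t1 * t2 * (iota v1 + iota v2) * (b2 * b1)"
      unfolding v(3) by (intro cl_eq_mult_right cl_eq_mult_left iota_add)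
    also have "\<dots> = t1 * (t2 * iota v1 * b2) * b1 + t1 * (t2 * iota v2 * b2) * b1"
      by (simp add: algebra_simps)
    also have "\<dots> \<approx> t1 * iota v1 * b1 + t1 * iota v2' * b1"
      using conjugate_commuting[OF C0_orthogonal_commute[OF orth iota_FA[OF v(1)] C0(2)] tb(2)] v2'
      by (intro cl_eq_add cl_eq_mult_right cl_eq_mult_left)
    also have "\<dots> \<approx> iota v1' + iota v2'"
      using conjugate_commuting[OF C0_orthogonal_commute[OF orth' iota_FA[OF \<open>v2' \<in> V2\<close>] C0(1)] tb(1)] v1'
      by (intro cl_eq_add)
    also have "\<dots> \<approx> iota (v1' + v2')"
      by (rule cl_eq_sym, rule iota_add)
    finally show ?thesis
      by blast
  qed
  have "t1 * t2 \<in> C0 scale q UNIV"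
    using C0 by (intro C0_mult C0_UNIV)
  with conj is_cl_inv_mult[OF inv] show ?thesis
    unfolding Gamma_plus_def Gamma_def by auto
qed

lemma twisted_conjugation_mult_orthogonal:
  assumes orth: "\<forall>v1\<in>V1. \<forall>v2\<in>V2. polar q v1 v2 = 0"
    and t1: "t1 \<in> C0 scale q V1" and t2: "t2 \<in> C0 scale q V2"
    and a1: "a1 \<in> FA V1" and s2: "s2 \<in> FA V2"
    and h1: "s1 * t1 * a1 \<approx> tau t1" and h2: "s2 * t2 * a2 \<approx> tau t2"
  shows "(s1 * s2) * (t1 * t2) * (a2 * a1) \<approx> tau (t1 * t2)"
proof -
  have orth': "\<forall>v2\<in>V2. \<forall>v1\<in>V1. polar q v2 v1 = 0"
    using orth by (metis polar_commute)
  have "(s1 * s2) * (t1 * t2) * (a2 * a1) = s1 * (s2 * t1) * t2 * a2 * a1"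
    by (simp only: mult.assoc)
  also have "\<dots> \<approx> s1 * (t1 * s2) * t2 * a2 * a1"
    using C0_orthogonal_commute[OF orth' s2 t1] by (intro cl_eq_mult_right cl_eq_mult_left)
  also have "\<dots> = s1 * t1 * (s2 * t2 * a2) * a1"
    by (simp only: mult.assoc)
  also have "\<dots> \<approx> s1 * t1 * tau t2 * a1"
    using h2 by (intro cl_eq_mult_right cl_eq_mult_left)
  also have "\<dots> = s1 * t1 * (tau t2 * a1)"
    by (simp only: mult.assoc)
  also have "\<dots> \<approx> s1 * t1 * (a1 * tau t2)"
    using C0_orthogonal_commute[OF orth a1 C0_tau[OF t2]] by (rule cl_eq_mult_left[OF cl_eq_sym])
  also have "\<dots> = (s1 * t1 * a1) * tau t2"
    by (simp only: mult.assoc)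
  also have "\<dots> \<approx> tau t1 * tau t2"
    using h1 by (rule cl_eq_mult_right)
  also have "\<dots> \<approx> tau t2 * tau t1"
    using t1 by (intro C0_orthogonal_commute[OF orth FA_tau C0_tau[OF t2]]) (simp add: C0_def)
  also have "\<dots> = tau (t1 * t2)"
    by (simp add: tau_mult)
  finally show ?thesis .
qed

end

theorem lemma5p2:
  fixes scale :: "'a::field \<Rightarrow> 'v::ab_group_add \<Rightarrow> 'v"
    and q :: "'v \<Rightarrow> 'a"
    and V1 V2 :: "'v set"
    and t1 t2 s1 s2 :: "('v, 'a) freealg"
  assumes char: "(2::'a) \<noteq> 0"
    and vs: "vector_space scale"
    and qf: "quadratic_form scale q"
    and nd1: "nondeg_quad_subspace scale q V1"
    and nd2: "nondeg_quad_subspace scale q V2"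
    and dsum: "V1 \<inter> V2 = {0}" "\<forall>v. \<exists>v1 \<in> V1. \<exists>v2 \<in> V2. v = v1 + v2"
    and orth: "\<forall>v1 \<in> V1. \<forall>v2 \<in> V2. polar q v1 v2 = 0"
    and t1: "t1 \<in> Gamma_plus scale q V1"
    and t2: "t2 \<in> Gamma_plus scale q V2"
    and s1: "s1 \<in> Gamma scale q V1"
    and s2: "s2 \<in> Gamma scale q V2"
    and h1: "cl_eq scale q V1 (s1 * t1 * cl_inv scale q V1 s1) (Nrm t1 * cl_inv scale q V1 t1)"
    and h2: "cl_eq scale q V2 (s2 * t2 * cl_inv scale q V2 s2) (Nrm t2 * cl_inv scale q V2 t2)"
  shows "t1 * t2 \<in> Gamma_plus scale q UNIV \<and>
         (\<exists>s'. is_cl_inv scale q UNIV (s1 * s2) s') \<and>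
         cl_eq scale q UNIV
           ((s1 * s2) * (t1 * t2) * cl_inv scale q UNIV (s1 * s2))
           (Nrm (t1 * t2) * cl_inv scale q UNIV (t1 * t2))"
  \<comment> \<open>Only the defining relations of C(V,q) enter the argument: the hypotheses on the
      characteristic, the vector-space and quadratic-form axioms, nondegeneracy and
      V1 \<inter> V2 = {0} are unused.\<close>
proof -
  define a1 a2 where "a1 = cl_inv scale q V1 s1" and "a2 = cl_inv scale q V2 s2"
  have inv_s: "is_cl_inv scale q V1 s1 a1" "is_cl_inv scale q V2 s2 a2"
    unfolding a1_def a2_def using s1 s2 by (simp_all add: Gamma_is_cl_inv)
  have t: "t1 * t2 \<in> Gamma_plus scale q UNIV"
    using dsum(2) orth t1 t2 by (rule Gamma_plus_mult_orthogonal)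
  have "cl_eq scale q UNIV ((s1 * s2) * (t1 * t2) * cl_inv scale q UNIV (s1 * s2))
      ((s1 * s2) * (t1 * t2) * (a2 * a1))"
    using inv_s by (intro cl_eq_mult_left cl_inv_mult is_cl_inv_UNIV)
  also have "cl_eq scale q UNIV \<dots> (tau (t1 * t2))"
  proof (rule twisted_conjugation_mult_orthogonal[OF orth])
    show "cl_eq scale q UNIV (s1 * t1 * a1) (tau t1)"
      using cl_eq_trans[OF cl_eq_UNIV[OF h1] Gamma_Nrm_mult_cl_inv] t1
      unfolding a1_def Gamma_plus_def by blast
    show "cl_eq scale q UNIV (s2 * t2 * a2) (tau t2)"
      using cl_eq_trans[OF cl_eq_UNIV[OF h2] Gamma_Nrm_mult_cl_inv] t2
      unfolding a2_def Gamma_plus_def by blast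
    show "a1 \<in> FA V1" "s2 \<in> FA V2"
      using inv_s s2 by (simp_all add: is_cl_inv_def Gamma_def)
  qed (use t1 t2 in \<open>simp_all add: Gamma_plus_def\<close>)
  also have "cl_eq scale q UNIV \<dots> (Nrm (t1 * t2) * cl_inv scale q UNIV (t1 * t2))"
    using t unfolding Gamma_plus_def by (blast intro: cl_eq_sym[OF Gamma_Nrm_mult_cl_inv])
  finally show ?thesis
    using t is_cl_inv_mult[OF is_cl_inv_UNIV is_cl_inv_UNIV, OF inv_s] by blast
qed

end
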